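(* Fix $\alpha\in(0,1)$ and $\nu\in(0,\alpha)$, and suppose the confidence regions at level $\alpha-\nu$, $\{C^{(\alpha-\nu)}_{\gamma\cdot\Gamma'}\}_{\Gamma'\subseteq\Gamma}$, are nested. Define the data-dependent set of targets $$\widehat\Gamma^+_\nu=\widehat\Gamma^+_\nu(y)=\bigcup_{P'\in B_\nu(y)}\Gamma_\nu(P')=\bigcup_{P'\in B_\nu(y)}\ \bigcup_{y'\in A_\nu(P')}\widehat\Gamma(y').$$ Then for every $P\in\mathcal P$, when $y\sim P$, $$P\left\{\theta_\gamma(P)\in C^{(\alpha-\nu)}_{\gamma\cdot\widehat\Gamma^+_\nu},\ \forall\gamma\in\widehat\Gamma(y)\right\}\ge 1-\alpha.$$
   Context: Let $\mathcal P$ be a (possibly nonparametric) family of distributions of an observation $y$. There is an index set $\Gamma$ of targets, and for each $P\in\mathcal P$ a family of estimands $\{\theta_\gamma(P)\}_{\gamma\in\Gamma}$. A selection rule $y\mapsto\widehat\Gamma(y)\subseteq\Gamma$ chooses a data-dependent set of targets. For every subset $\Gamma'\subseteq\Gamma$ and every level $\beta\in(0,1)$ we have confidence regions $\{C^{\beta}_{\gamma\cdot\Gamma'}\}_{\gamma\in\Gamma'}$ (functions of $y$) that are simultaneously valid: for every $P\in\mathcal P$, $P\{\theta_\gamma(P)\in C^{\beta}_{\gamma\cdot\Gamma'}\ \forall\gamma\in\Gamma'\}\ge1-\beta$. The regions at level $\beta$ are called nested if for all $\Gamma_1\subseteq\Gamma_2\subseteq\Gamma$ and all $\gamma\in\Gamma_1$,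 $C^\beta_{\gamma\cdot\Gamma_1}\subseteq C^\beta_{\gamma\cdot\Gamma_2}$. For each $P\in\mathcal P$ and $\nu\in(0,1)$, $A_\nu(P)$ is a set of observations with $P\{y\in A_\nu(P)\}\ge1-\nu$ (an acceptance region). The set of plausible targets under $P$ is $\Gamma_\nu(P)=\bigcup_{y'\in A_\nu(P)}\widehat\Gamma(y')$, and the inversion is $B_\nu(y)=\{P\in\mathcal P: y\in A_\nu(P)\}$. *)

theory Defs
  imports "HOL-Probability.Probability"
begin

definition plausible_targets ::
  "('y \<Rightarrow> 'g set) \<Rightarrow> (real \<Rightarrow> 'y measure \<Rightarrow> 'y set) \<Rightarrow> real \<Rightarrow> 'y measure \<Rightarrow> 'g set" where
  "plausible_targets Ghat A \<nu> P = (\<Union>y'\<in>A \<nu> P. Ghat y')"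

definition inversion ::
  "'y measure set \<Rightarrow> (real \<Rightarrow> 'y measure \<Rightarrow> 'y set) \<Rightarrow> real \<Rightarrow> 'y \<Rightarrow> 'y measure set" where
  "inversion \<P> A \<nu> y = {P \<in> \<P>. y \<in> A \<nu> P}"

definition Gamma_plus ::
  "'y measure set \<Rightarrow> ('y \<Rightarrow> 'g set) \<Rightarrow> (real \<Rightarrow> 'y measure \<Rightarrow> 'y set) \<Rightarrow> real \<Rightarrow> 'y \<Rightarrow> 'g set" where
  "Gamma_plus \<P> Ghat A \<nu> y = (\<Union>P'\<in>inversion \<P> A \<nu> y. plausible_targets Ghat A \<nu> P')"

definition nested ::
  "'g set \<Rightarrow> (real \<Rightarrow> 'g set \<Rightarrow> 'g \<Rightarrow> 'y \<Rightarrow> 'e set) \<Rightarrow> real \<Rightarrow> bool" where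
  "nested \<Gamma> C \<beta> = (\<forall>\<Gamma>1 \<Gamma>2 \<gamma> y. \<Gamma>1 \<subseteq> \<Gamma>2 \<longrightarrow> \<Gamma>2 \<subseteq> \<Gamma> \<longrightarrow> \<gamma> \<in> \<Gamma>1 \<longrightarrow>
      C \<beta> \<Gamma>1 \<gamma> y \<subseteq> C \<beta> \<Gamma>2 \<gamma> y)"

end

theory Submission
  imports Defs
begin

text \<open>Apply the simultaneous regions to the fixed, non-random target set \<open>\<Gamma>\<^sub>\<nu>(P)\<close> of plausible
  targets, and intersect with the acceptance event \<open>y \<in> A\<^sub>\<nu>(P)\<close>; by Bonferroni this event has
  probability at least \<open>1 - (\<alpha> - \<nu>) - \<nu>\<close>. On it \<open>P \<in> B\<^sub>\<nu>(y)\<close>, hence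
  \<open>\<Gamma>(y) \<subseteq> \<Gamma>\<^sub>\<nu>(P) \<subseteq> \<Gamma>\<^sup>+\<^sub>\<nu>(y)\<close>, and nestedness transfers coverage from the regions
  for \<open>\<Gamma>\<^sub>\<nu>(P)\<close> to those for the data-dependent set \<open>\<Gamma>\<^sup>+\<^sub>\<nu>(y)\<close>.\<close>

lemma measure_pos_imp_sets:
  assumes "measure M S > 0"
  shows "S \<in> sets M"
  using assms measure_notin_sets by fastforce

lemma (in prob_space) prob_Int_ge:
  assumes "S \<in> events" "T \<in> events"
  shows "prob (S \<inter> T) \<ge> prob S + prob T - 1"
proof -
  have "prob (S \<union> T) + prob (S \<inter> T) = prob S + prob T"
    using finite_measure_Union'[OF assms] finite_measure_Diff'[OF assms(2,1)]
    by (simp add: Int_commute)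
  moreover have "prob (S \<union> T) \<le> 1" by simp
  ultimately show ?thesis by linarith
qed

lemma plausible_targets_subset:
  "(\<And>y. Ghat y \<subseteq> \<Gamma>) \<Longrightarrow> plausible_targets Ghat A \<nu> P \<subseteq> \<Gamma>"
  unfolding plausible_targets_def by blast

lemma Gamma_plus_subset:
  "(\<And>y. Ghat y \<subseteq> \<Gamma>) \<Longrightarrow> Gamma_plus \<P> Ghat A \<nu> y \<subseteq> \<Gamma>"
  unfolding Gamma_plus_def plausible_targets_def by blast

lemma plausible_targets_subset_Gamma_plus:
  "P \<in> \<P> \<Longrightarrow> y \<in> A \<nu> P \<Longrightarrow> plausible_targets Ghat A \<nu> P \<subseteq> Gamma_plus \<P> Ghat A \<nu> y"
  unfolding Gamma_plus_def inversion_def by blast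

lemma nestedD:
  "nested \<Gamma> C \<beta> \<Longrightarrow> \<Gamma>1 \<subseteq> \<Gamma>2 \<Longrightarrow> \<Gamma>2 \<subseteq> \<Gamma> \<Longrightarrow> \<gamma> \<in> \<Gamma>1 \<Longrightarrow> C \<beta> \<Gamma>1 \<gamma> y \<subseteq> C \<beta> \<Gamma>2 \<gamma> y"
  unfolding nested_def by blast

lemma coverage_transfers_to_Gamma_plus:
  assumes sel: "\<And>y. Ghat y \<subseteq> \<Gamma>"
    and nest: "nested \<Gamma> C \<beta>"
    and P: "P \<in> \<P>" and yA: "y \<in> A \<nu> P"
    and cover: "\<forall>\<gamma>\<in>plausible_targets Ghat A \<nu> P. t \<gamma> \<in> C \<beta> (plausible_targets Ghat A \<nu> P) \<gamma> y"
  shows "\<forall>\<gamma>\<in>Ghat y. t \<gamma> \<in> C \<beta> (Gamma_plus \<P> Ghat A \<nu> y) \<gamma> y"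
proof
  fix \<gamma> assume "\<gamma> \<in> Ghat y"
  then have \<gamma>: "\<gamma> \<in> plausible_targets Ghat A \<nu> P"
    using yA unfolding plausible_targets_def by blast
  have "C \<beta> (plausible_targets Ghat A \<nu> P) \<gamma> y \<subseteq> C \<beta> (Gamma_plus \<P> Ghat A \<nu> y) \<gamma> y"
    by (rule nestedD[OF nest plausible_targets_subset_Gamma_plus[of P \<P> y A \<nu> Ghat, OF P yA]
          Gamma_plus_subset[OF sel] \<gamma>])
  with cover \<gamma> show "t \<gamma> \<in> C \<beta> (Gamma_plus \<P> Ghat A \<nu> y) \<gamma> y" by blast
qed

theorem theorem1:
  fixes \<P> :: "'y measure set"
    and \<Gamma> :: "'g set"
    and \<theta> :: "'y measure \<Rightarrow> 'g \<Rightarrow> 'e"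
    and Ghat :: "'y \<Rightarrow> 'g set"
    and C :: "real \<Rightarrow> 'g set \<Rightarrow> 'g \<Rightarrow> 'y \<Rightarrow> 'e set"
    and A :: "real \<Rightarrow> 'y measure \<Rightarrow> 'y set"
    and \<alpha> \<nu> :: real
  assumes probs: "\<And>P. P \<in> \<P> \<Longrightarrow> prob_space P"
    and sel: "\<And>y. Ghat y \<subseteq> \<Gamma>"
    and valid: "\<And>P \<Gamma>' \<beta>. P \<in> \<P> \<Longrightarrow> \<Gamma>' \<subseteq> \<Gamma> \<Longrightarrow> 0 < \<beta> \<Longrightarrow> \<beta> < 1 \<Longrightarrow>
        measure P {y \<in> space P. \<forall>\<gamma>\<in>\<Gamma>'. \<theta> P \<gamma> \<in> C \<beta> \<Gamma>' \<gamma> y} \<ge> 1 - \<beta>"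
    and accept: "\<And>P \<mu>. P \<in> \<P> \<Longrightarrow> 0 < \<mu> \<Longrightarrow> \<mu> < 1 \<Longrightarrow>
        measure P {y \<in> space P. y \<in> A \<mu> P} \<ge> 1 - \<mu>"
    and alpha: "0 < \<alpha>" "\<alpha> < 1"
    and nu: "0 < \<nu>" "\<nu> < \<alpha>"
    and nest: "nested \<Gamma> C (\<alpha> - \<nu>)"
    and P: "P \<in> \<P>"
  shows "\<exists>E \<in> sets P. E \<subseteq> {y \<in> space P. \<forall>\<gamma>\<in>Ghat y.
            \<theta> P \<gamma> \<in> C (\<alpha> - \<nu>) (Gamma_plus \<P> Ghat A \<nu> y) \<gamma> y}
         \<and> measure P E \<ge> 1 - \<alpha>"
proof -
  interpret prob_space P using probs P by blast
  define \<Gamma>\<^sub>\<nu> where "\<Gamma>\<^sub>\<nu> = plausible_targets Ghat A \<nu> P"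
  define G where "G = {y \<in> space P. \<forall>\<gamma>\<in>\<Gamma>\<^sub>\<nu>. \<theta> P \<gamma> \<in> C (\<alpha> - \<nu>) \<Gamma>\<^sub>\<nu> \<gamma> y}"
  define S where "S = {y \<in> space P. y \<in> A \<nu> P}"
  have mG: "prob G \<ge> 1 - (\<alpha> - \<nu>)"
    unfolding G_def \<Gamma>\<^sub>\<nu>_def
    using valid[OF P plausible_targets_subset[of Ghat \<Gamma> A \<nu> P, OF sel], of "\<alpha> - \<nu>"] alpha nu
    by auto
  have mS: "prob S \<ge> 1 - \<nu>" unfolding S_def using accept[OF P] alpha nu by auto
  have G: "G \<in> events" using measure_pos_imp_sets[of P G] mG alpha nu by linarith
  have S: "S \<in> events" using measure_pos_imp_sets[of P S] mS alpha nu by linarith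
  have "prob (G \<inter> S) \<ge> 1 - \<alpha>" using prob_Int_ge[OF G S] mG mS by linarith
  moreover have "G \<inter> S \<subseteq> {y \<in> space P. \<forall>\<gamma>\<in>Ghat y.
      \<theta> P \<gamma> \<in> C (\<alpha> - \<nu>) (Gamma_plus \<P> Ghat A \<nu> y) \<gamma> y}"
    using coverage_transfers_to_Gamma_plus[OF sel nest P, where t = "\<theta> P"]
    unfolding G_def S_def \<Gamma>\<^sub>\<nu>_def by auto
  ultimately show ?thesis using G S by blast
qed

end
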